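(* Let $G=\langle x\rangle$ be a finite cyclic group. Then $G$ admits a $2$-PDR of valency $3$ if and only if $o(x)\geq 5$.
   Context: For a group $G$ and an integer $m\geq 2$, write $g_i$ for the element $(g,i)$ of $G\times\mathbb{Z}_m$. Given subsets $T_{i,j}\subseteq G$ for $i,j\in\mathbb{Z}_m$, the $m$-Cayley digraph $\mathrm{Cay}(G,T_{i,j}:i,j\in\mathbb{Z}_m)$ is the digraph with vertex set $G\times\mathbb{Z}_m$ and arc set $\bigcup_{i,j\in\mathbb{Z}_m}\{(g_i,(tg)_j): t\in T_{i,j},\, g\in G\}$. It is called an $m$-partite Cayley digraph if $T_{i,i}=\emptyset$ for all $i\in\mathbb{Z}_m$. A digraph is regular of valency $k$ if every vertex has out-valency $k$ and in-valency $k$. A group $G$ admits an $m$-PDR of valency $k$ if there exists an $m$-partite Cayley digraph $\Gamma$ over $G$ which is regular of valency $k$ and whose full automorphism group $\mathrm{Aut}(\Gamma)$ is isomorphic to $G$. $o(x)$ denotes the order of $x$. *)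

theory Defs
  imports "HOL-Algebra.Algebra"
begin

definition mcay_vertices :: "('a, 'b) monoid_scheme \<Rightarrow> nat \<Rightarrow> ('a \<times> nat) set" where
  "mcay_vertices G m = carrier G \<times> {0..<m}"

definition mcay_arcs :: "('a, 'b) monoid_scheme \<Rightarrow> nat \<Rightarrow> (nat \<Rightarrow> nat \<Rightarrow> 'a set)
    \<Rightarrow> (('a \<times> nat) \<times> ('a \<times> nat)) set" where
  "mcay_arcs G m T = {((g, i), (t \<otimes>\<^bsub>G\<^esub> g, j)) | g i j t.
      i < m \<and> j < m \<and> t \<in> T i j \<and> g \<in> carrier G}"

definition regular_digraph :: "'v set \<Rightarrow> ('v \<times> 'v) set \<Rightarrow> nat \<Rightarrow> bool" where
  "regular_digraph V A k \<longleftrightarrow>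
     (\<forall>u\<in>V. card {v\<in>V. (u, v) \<in> A} = k \<and> card {v\<in>V. (v, u) \<in> A} = k)"

definition digraph_aut :: "'v set \<Rightarrow> ('v \<times> 'v) set \<Rightarrow> ('v \<Rightarrow> 'v) monoid" where
  "digraph_aut V A = (BijGroup V)\<lparr>carrier :=
     {\<sigma> \<in> Bij V. \<forall>u\<in>V. \<forall>v\<in>V. (u, v) \<in> A \<longleftrightarrow> (\<sigma> u, \<sigma> v) \<in> A}\<rparr>"

definition admits_PDR :: "('a, 'b) monoid_scheme \<Rightarrow> nat \<Rightarrow> nat \<Rightarrow> bool" where
  "admits_PDR G m k \<longleftrightarrow>
     (\<exists>T. (\<forall>i<m. \<forall>j<m. T i j \<subseteq> carrier G) \<and> (\<forall>i<m. T i i = {}) \<and>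
          regular_digraph (mcay_vertices G m) (mcay_arcs G m T) k \<and>
          digraph_aut (mcay_vertices G m) (mcay_arcs G m T) \<cong> G)"

end

theory Submission
  imports Defs
begin

text \<open>
  Right translations (g, i) \<mapsto> (g h, i) are automorphisms of every m-Cayley digraph, and for
  abelian G they form a copy of G; so for finite G the automorphism group is isomorphic to G
  exactly when there are no other automorphisms.

  If |G| \<le> 4, regularity of valency 3 makes T01 and T10 subsets of size 3 of G, so
  T10 = d T01 for some d, and (g, 0) \<mapsto> (g, 1), (g, 1) \<mapsto> (d g, 0) is an automorphism
  that is not a translation.

  If o(x) \<ge> 5, take T01 = {1, x, x^2} and T10 = {x^-1, 1, x^2}. The two-way arcs form the
  Hamiltonian cycle (g, 0), (x g, 1), (x g, 0), (x^2 g, 1), ..., of length 2 o(x) \<ge> 10, and the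
  one-way arc leaving a vertex ends 3 steps further along it from level 0 but 5 steps from
  level 1. Hence every automorphism preserves the levels, then commutes with multiplication
  by x, and is therefore a right translation.
\<close>

definition digon :: "('v \<times> 'v) set \<Rightarrow> 'v \<Rightarrow> 'v \<Rightarrow> bool" where
  "digon A u v \<longleftrightarrow> (u, v) \<in> A \<and> (v, u) \<in> A"

definition one_way_arc :: "('v \<times> 'v) set \<Rightarrow> 'v \<Rightarrow> 'v \<Rightarrow> bool" where
  "one_way_arc A u v \<longleftrightarrow> (u, v) \<in> A \<and> (v, u) \<notin> A"

lemma digraph_aut_carrier:
  "\<sigma> \<in> carrier (digraph_aut V A) \<longleftrightarrow>
     \<sigma> \<in> Bij V \<and> (\<forall>u\<in>V. \<forall>v\<in>V. (u, v) \<in> A \<longleftrightarrow> (\<sigma> u, \<sigma> v) \<in> A)"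
  by (simp add: digraph_aut_def)

lemma digraph_aut_closed: "\<sigma> \<in> carrier (digraph_aut V A) \<Longrightarrow> u \<in> V \<Longrightarrow> \<sigma> u \<in> V"
  by (auto simp: digraph_aut_carrier Bij_def bij_betw_def)

lemma digraph_aut_inj_on: "\<sigma> \<in> carrier (digraph_aut V A) \<Longrightarrow> inj_on \<sigma> V"
  by (auto simp: digraph_aut_carrier Bij_def bij_betw_def)

lemma digraph_aut_arc_iff:
  "\<sigma> \<in> carrier (digraph_aut V A) \<Longrightarrow> u \<in> V \<Longrightarrow> v \<in> V \<Longrightarrow>
     (\<sigma> u, \<sigma> v) \<in> A \<longleftrightarrow> (u, v) \<in> A"
  by (simp add: digraph_aut_carrier)

lemma digraph_aut_digon_iff:
  "\<sigma> \<in> carrier (digraph_aut V A) \<Longrightarrow> u \<in> V \<Longrightarrow> v \<in> V \<Longrightarrow>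
     digon A (\<sigma> u) (\<sigma> v) \<longleftrightarrow> digon A u v"
  by (simp add: digon_def digraph_aut_arc_iff)

lemma digraph_aut_one_way_arc_iff:
  "\<sigma> \<in> carrier (digraph_aut V A) \<Longrightarrow> u \<in> V \<Longrightarrow> v \<in> V \<Longrightarrow>
     one_way_arc A (\<sigma> u) (\<sigma> v) \<longleftrightarrow> one_way_arc A u v"
  by (simp add: one_way_arc_def digraph_aut_arc_iff)

lemma finite_digraph_aut:
  assumes "finite V"
  shows "finite (carrier (digraph_aut V A))"
proof (rule finite_subset)
  show "carrier (digraph_aut V A) \<subseteq> V \<rightarrow>\<^sub>E V"
    by (auto simp: digraph_aut_carrier Bij_def PiE_iff extensional_def dest: bij_betw_apply)
  show "finite (V \<rightarrow>\<^sub>E V)"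
    using assms by (simp add: finite_PiE)
qed

lemma mem_mcay_vertices [simp]: "(g, i) \<in> mcay_vertices G m \<longleftrightarrow> g \<in> carrier G \<and> i < m"
  by (simp add: mcay_vertices_def)

lemma finite_mcay_vertices: "finite (carrier G) \<Longrightarrow> finite (mcay_vertices G m)"
  by (simp add: mcay_vertices_def)

lemma mcay_aut_closed:
  "\<sigma> \<in> carrier (digraph_aut (mcay_vertices G m) A) \<Longrightarrow> g \<in> carrier G \<Longrightarrow> i < m \<Longrightarrow>
     \<sigma> (g, i) \<in> mcay_vertices G m"
  by (simp add: digraph_aut_closed)

section \<open>Automorphisms of m-Cayley digraphs\<close>

definition mcay_rmult :: "('a, 'b) monoid_scheme \<Rightarrow> nat \<Rightarrow> 'a \<Rightarrow> 'a \<times> nat \<Rightarrow> 'a \<times> nat" where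
  "mcay_rmult G m h = (\<lambda>v \<in> mcay_vertices G m. (fst v \<otimes>\<^bsub>G\<^esub> h, snd v))"

definition mcay_swap :: "('a, 'b) monoid_scheme \<Rightarrow> 'a \<Rightarrow> 'a \<times> nat \<Rightarrow> 'a \<times> nat" where
  "mcay_swap G d =
     (\<lambda>v \<in> mcay_vertices G 2. if snd v = 0 then (fst v, 1) else (d \<otimes>\<^bsub>G\<^esub> fst v, 0))"

context group
begin

lemma mcay_arc_iff:
  assumes "g \<in> carrier G" "h \<in> carrier G" "T i j \<subseteq> carrier G"
  shows "((g, i), (h, j)) \<in> mcay_arcs G m T \<longleftrightarrow> i < m \<and> j < m \<and> h \<otimes> inv g \<in> T i j"
proof -
  have "(\<exists>t\<in>T i j. h = t \<otimes> g) \<longleftrightarrow> h \<otimes> inv g \<in> T i j"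
  proof
    assume "\<exists>t\<in>T i j. h = t \<otimes> g"
    then obtain t where "t \<in> T i j" "h = t \<otimes> g" by blast
    with assms show "h \<otimes> inv g \<in> T i j" by (auto simp: m_assoc)
  next
    assume "h \<otimes> inv g \<in> T i j"
    moreover have "h = h \<otimes> inv g \<otimes> g" using assms by (simp add: m_assoc)
    ultimately show "\<exists>t\<in>T i j. h = t \<otimes> g" by blast
  qed
  then show ?thesis
    using assms(1) by (auto simp: mcay_arcs_def)
qed

lemma mcay_out_nbrs_of_one:
  assumes "\<forall>i<m. \<forall>j<m. T i j \<subseteq> carrier G" "i < m"
  shows "{v \<in> mcay_vertices G m. ((\<one>, i), v) \<in> mcay_arcs G m T} = {(t, j) |t j. j < m \<and> t \<in> T i j}"
proof -
  have "((\<one>, i), (t, j)) \<in> mcay_arcs G m T \<longleftrightarrow> j < m \<and> t \<in> T i j" if "t \<in> carrier G" for t j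
    using assms that by (cases "j < m") (auto simp: mcay_arc_iff, auto simp: mcay_arcs_def)
  moreover have "t \<in> carrier G" if "j < m" "t \<in> T i j" for t j
    using assms that by blast
  ultimately show ?thesis
    by (auto simp: mcay_vertices_def)
qed

lemma mem_l_coset_iff:
  assumes "d \<in> carrier G" "S \<subseteq> carrier G" "y \<in> carrier G"
  shows "y \<in> d <# S \<longleftrightarrow> inv d \<otimes> y \<in> S"
proof
  assume "y \<in> d <# S"
  then obtain t where "t \<in> S" "y = d \<otimes> t"
    unfolding l_coset_def by blast
  with assms show "inv d \<otimes> y \<in> S"
    by (auto simp: m_assoc[symmetric])
next
  assume "inv d \<otimes> y \<in> S"
  moreover have "y = d \<otimes> (inv d \<otimes> y)"
    using assms by (simp add: m_assoc[symmetric])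
  ultimately show "y \<in> d <# S"
    unfolding l_coset_def by blast
qed

lemma l_coset_eq_if_cosingleton:
  assumes fin: "finite (carrier G)" and S: "S \<subseteq> carrier G" and R: "R \<subseteq> carrier G"
    and card_eq: "card R = card S" and large: "card (carrier G) \<le> Suc (card S)"
  obtains d where "d \<in> carrier G" "R = d <# S"
proof (cases "card S = card (carrier G)")
  case True
  then have "S = carrier G" "R = carrier G"
    using card_subset_eq[OF fin] S R card_eq by metis+
  moreover have "\<one> <# carrier G = carrier G"
    by (force simp: l_coset_def)
  ultimately show ?thesis
    using that by blast
next
  case False
  have "card S \<le> card (carrier G)"
    using card_mono[OF fin S] .
  then have "card (carrier G - S) = 1" "card (carrier G - R) = 1"
    using False large card_eq fin S R by (simp_all add: card_Diff_subset finite_subset)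
  then obtain s r where s: "carrier G - S = {s}" and r: "carrier G - R = {r}"
    by (auto simp: card_1_singleton_iff)
  define d where "d = r \<otimes> inv s"
  have sr: "s \<in> carrier G" "r \<in> carrier G" "s \<notin> S" "r \<notin> R"
    using s r by auto
  then have d: "d \<in> carrier G"
    by (simp add: d_def)
  have "d \<otimes> s = r"
    using sr by (simp add: d_def m_assoc)
  then have "inv d \<otimes> y = s \<longleftrightarrow> y = r" if "y \<in> carrier G" for y
    using sr d that by (simp add: inv_solve_left')
  then have "y \<in> R \<longleftrightarrow> y \<in> d <# S" if "y \<in> carrier G" for y
    using s r d S that by (auto simp: mem_l_coset_iff)
  moreover have "d <# S \<subseteq> carrier G"
    using l_coset_subset_G[OF S d] .
  ultimately have "R = d <# S"
    using R by blast
  with d show ?thesis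
    by (rule that)
qed

lemma regular_mcay2_card_conn:
  assumes T: "\<forall>i<2. \<forall>j<2. T i j \<subseteq> carrier G" and T_diag: "T 0 0 = {}" "T 1 1 = {}"
    and reg: "regular_digraph (mcay_vertices G 2) (mcay_arcs G 2 T) k"
  shows "card (T 0 1) = k" "card (T 1 0) = k"
proof -
  have out_deg: "card {v \<in> mcay_vertices G 2. ((\<one>, i), v) \<in> mcay_arcs G 2 T} = k" if "i < 2" for i
    using reg that by (simp add: regular_digraph_def)
  have "{(t, j) |t j. j < 2 \<and> t \<in> T 0 j} = (\<lambda>t. (t, 1)) ` T 0 1"
    "{(t, j) |t j. j < 2 \<and> t \<in> T 1 j} = (\<lambda>t. (t, 0)) ` T 1 0"
    using T_diag by (auto simp: less_2_cases_iff)
  then show "card (T 0 1) = k" "card (T 1 0) = k"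
    using out_deg[of 0] out_deg[of 1] mcay_out_nbrs_of_one[OF T]
    by (simp_all add: card_image inj_on_def)
qed

lemma mcay_rmult_in_aut:
  assumes h: "h \<in> carrier G" and T: "\<forall>i<m. \<forall>j<m. T i j \<subseteq> carrier G"
  shows "mcay_rmult G m h \<in> carrier (digraph_aut (mcay_vertices G m) (mcay_arcs G m T))"
proof -
  let ?V = "mcay_vertices G m"
  have "bij_betw (mcay_rmult G m h) ?V ?V"
    by (rule bij_betw_byWitness[where f' = "mcay_rmult G m (inv h)"])
       (use h in \<open>auto simp: mcay_rmult_def mcay_vertices_def m_assoc\<close>)
  moreover have "(u, v) \<in> mcay_arcs G m T \<longleftrightarrow>
      (mcay_rmult G m h u, mcay_rmult G m h v) \<in> mcay_arcs G m T"
    if uv_in: "u \<in> ?V" "v \<in> ?V" for u v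
  proof -
    obtain g i k j where uv: "u = (g, i)" "v = (k, j)" "g \<in> carrier G" "k \<in> carrier G" "i < m" "j < m"
      using uv_in by (cases u, cases v) auto
    have "k \<otimes> h \<otimes> inv (g \<otimes> h) = k \<otimes> (h \<otimes> inv h) \<otimes> inv g"
      using uv h by (simp add: inv_mult_group m_assoc del: r_inv Units_r_inv)
    also have "\<dots> = k \<otimes> inv g"
      using uv h by simp
    finally have "k \<otimes> h \<otimes> inv (g \<otimes> h) = k \<otimes> inv g" .
    then show ?thesis
      using uv h T by (simp add: mcay_rmult_def mcay_arc_iff)
  qed
  ultimately show ?thesis
    by (auto simp: digraph_aut_carrier Bij_def mcay_rmult_def)
qed

lemma inj_on_mcay_rmult:
  assumes "0 < m"
  shows "inj_on (mcay_rmult G m) (carrier G)"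
proof (rule inj_onI)
  fix a b assume ab: "a \<in> carrier G" "b \<in> carrier G" and "mcay_rmult G m a = mcay_rmult G m b"
  then have "mcay_rmult G m a (\<one>, 0) = mcay_rmult G m b (\<one>, 0)" by simp
  then show "a = b" using ab assms by (simp add: mcay_rmult_def)
qed

lemma mcay_rmult_ne_swap: "mcay_rmult G 2 h \<noteq> mcay_swap G d"
proof
  assume "mcay_rmult G 2 h = mcay_swap G d"
  then have "mcay_rmult G 2 h (\<one>, 0) = mcay_swap G d (\<one>, 0)" by simp
  then show False by (simp add: mcay_rmult_def mcay_swap_def)
qed

lemma mcay_aut_not_iso:
  assumes fin: "finite (carrier G)" and m: "0 < m" and T: "\<forall>i<m. \<forall>j<m. T i j \<subseteq> carrier G"
    and \<sigma>: "\<sigma> \<in> carrier (digraph_aut (mcay_vertices G m) (mcay_arcs G m T))"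
    and not_rmult: "\<sigma> \<notin> mcay_rmult G m ` carrier G"
  shows "\<not> digraph_aut (mcay_vertices G m) (mcay_arcs G m T) \<cong> G"
proof
  let ?Aut = "digraph_aut (mcay_vertices G m) (mcay_arcs G m T)"
  assume "?Aut \<cong> G"
  then have "card (carrier ?Aut) = card (carrier G)"
    by (rule iso_same_card)
  moreover have "insert \<sigma> (mcay_rmult G m ` carrier G) \<subseteq> carrier ?Aut"
    using \<sigma> mcay_rmult_in_aut[OF _ T] by blast
  then have "card (insert \<sigma> (mcay_rmult G m ` carrier G)) \<le> card (carrier ?Aut)"
    using fin by (intro card_mono finite_digraph_aut finite_mcay_vertices)
  ultimately show False
    using not_rmult fin by (simp add: card_image[OF inj_on_mcay_rmult[OF m]])
qed

end

context comm_group
begin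

lemma mcay_rmult_hom:
  assumes T: "\<forall>i<m. \<forall>j<m. T i j \<subseteq> carrier G"
  shows "mcay_rmult G m \<in> hom G (digraph_aut (mcay_vertices G m) (mcay_arcs G m T))"
proof (rule homI)
  let ?Aut = "digraph_aut (mcay_vertices G m) (mcay_arcs G m T)"
  show "mcay_rmult G m a \<in> carrier ?Aut" if "a \<in> carrier G" for a
    using mcay_rmult_in_aut[OF that T] .
  fix a b assume ab: "a \<in> carrier G" "b \<in> carrier G"
  then have "mcay_rmult G m a \<otimes>\<^bsub>?Aut\<^esub> mcay_rmult G m b =
      compose (mcay_vertices G m) (mcay_rmult G m a) (mcay_rmult G m b)"
    using mcay_rmult_in_aut[OF _ T] by (simp add: digraph_aut_def BijGroup_def digraph_aut_carrier)
  also have "\<dots> = mcay_rmult G m (a \<otimes> b)"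
  proof
    fix v
    show "compose (mcay_vertices G m) (mcay_rmult G m a) (mcay_rmult G m b) v = mcay_rmult G m (a \<otimes> b) v"
      using ab by (cases "v \<in> mcay_vertices G m")
        (auto simp: compose_def mcay_rmult_def mcay_vertices_def m_ac)
  qed
  finally show "mcay_rmult G m (a \<otimes> b) = mcay_rmult G m a \<otimes>\<^bsub>?Aut\<^esub> mcay_rmult G m b"
    by simp
qed

lemma mcay_aut_iso:
  assumes m: "0 < m" and T: "\<forall>i<m. \<forall>j<m. T i j \<subseteq> carrier G"
    and only_rmult: "carrier (digraph_aut (mcay_vertices G m) (mcay_arcs G m T)) \<subseteq> mcay_rmult G m ` carrier G"
  shows "digraph_aut (mcay_vertices G m) (mcay_arcs G m T) \<cong> G"
proof -
  have "mcay_rmult G m ` carrier G = carrier (digraph_aut (mcay_vertices G m) (mcay_arcs G m T))"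
    using only_rmult mcay_rmult_in_aut[OF _ T] by blast
  then have "mcay_rmult G m \<in> iso G (digraph_aut (mcay_vertices G m) (mcay_arcs G m T))"
    using mcay_rmult_hom[OF T] inj_on_mcay_rmult[OF m] by (simp add: iso_def bij_betw_def)
  then show ?thesis
    by (intro iso_sym is_isoI)
qed

lemma mcay_swap_in_aut:
  assumes T: "\<forall>i<2. \<forall>j<2. T i j \<subseteq> carrier G" and d: "d \<in> carrier G"
    and T_diag: "T 0 0 = T 1 1" and T_10: "T 1 0 = d <# T 0 1"
  shows "mcay_swap G d \<in> carrier (digraph_aut (mcay_vertices G 2) (mcay_arcs G 2 T))"
proof -
  let ?V = "mcay_vertices G 2"
  have bij: "bij_betw (mcay_swap G d) ?V ?V"
    by (rule bij_betw_byWitness[where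
          f' = "\<lambda>v\<in>?V. if snd v = 0 then (inv d \<otimes> fst v, 1) else (fst v, 0)"])
       (use d in \<open>auto simp: mcay_swap_def mcay_vertices_def less_2_cases_iff m_assoc[symmetric]\<close>)
  have T_01: "T 0 1 \<subseteq> carrier G"
    using T[rule_format, of 0 1] by simp
  have T_10_iff: "y \<in> T 1 0 \<longleftrightarrow> inv d \<otimes> y \<in> T 0 1" if "y \<in> carrier G" for y
    unfolding T_10 by (rule mem_l_coset_iff[OF d T_01 that])
  have "(u, v) \<in> mcay_arcs G 2 T \<longleftrightarrow> (mcay_swap G d u, mcay_swap G d v) \<in> mcay_arcs G 2 T"
    if uv_in: "u \<in> ?V" "v \<in> ?V" for u v
  proof -
    obtain g i k j where uv: "u = (g, i)" "v = (k, j)" "g \<in> carrier G" "k \<in> carrier G" "i < 2" "j < 2"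
      using uv_in by (cases u, cases v) auto
    have "d \<otimes> k \<otimes> inv (d \<otimes> g) = k \<otimes> (d \<otimes> inv d) \<otimes> inv g"
      using d uv by (simp add: inv_mult m_ac del: r_inv Units_r_inv)
    also have "\<dots> = k \<otimes> inv g"
      using d uv by simp
    finally have "d \<otimes> k \<otimes> inv (d \<otimes> g) = k \<otimes> inv g" .
    moreover have "inv d \<otimes> (d \<otimes> k \<otimes> inv g) = k \<otimes> inv g"
      using d uv by (simp add: m_assoc[symmetric])
    moreover have "inv d \<otimes> (k \<otimes> inv g) = k \<otimes> inv (d \<otimes> g)"
      using d uv by (simp add: inv_mult m_ac)
    ultimately show ?thesis
      using uv d T T_diag T_10_iff by (auto simp: mcay_swap_def mcay_arc_iff less_2_cases_iff)
  qed
  then show ?thesis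
    using bij by (auto simp: digraph_aut_carrier Bij_def mcay_swap_def)
qed

lemma not_admits_PDR_2_if_card_le:
  assumes fin: "finite (carrier G)" and small: "card (carrier G) \<le> Suc k"
  shows "\<not> admits_PDR G 2 k"
proof
  assume "admits_PDR G 2 k"
  then obtain T where T: "\<forall>i<2. \<forall>j<2. T i j \<subseteq> carrier G" and T_diag: "\<forall>i<2. T i i = {}"
    and reg: "regular_digraph (mcay_vertices G 2) (mcay_arcs G 2 T) k"
    and iso: "digraph_aut (mcay_vertices G 2) (mcay_arcs G 2 T) \<cong> G"
    unfolding admits_PDR_def by blast
  have T_00: "T 0 0 = {}" and T_11: "T 1 1 = {}"
    using T_diag by simp_all
  obtain d where d: "d \<in> carrier G" and T_10: "T 1 0 = d <# T 0 1"
    using l_coset_eq_if_cosingleton[OF fin, of "T 0 1" "T 1 0"] T[rule_format, of 0 1]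
      T[rule_format, of 1 0] regular_mcay2_card_conn[OF T T_00 T_11 reg] small
    by auto
  have "mcay_swap G d \<in> carrier (digraph_aut (mcay_vertices G 2) (mcay_arcs G 2 T))"
    using mcay_swap_in_aut[OF T d] T_00 T_11 T_10 by simp
  moreover have "mcay_swap G d \<notin> mcay_rmult G 2 ` carrier G"
    using mcay_rmult_ne_swap by (metis imageE)
  ultimately show False
    using mcay_aut_not_iso[OF fin pos2 T] iso by blast
qed

end

lemma (in group) comm_group_if_generate_singleton:
  assumes x: "x \<in> carrier G" and gen: "generate G {x} = carrier G"
  shows "comm_group G"
proof -
  have "carrier G = range (\<lambda>n::int. x [^] n)"
    using generate_pow[OF x] gen by auto
  then have "cyclic_group G"
    unfolding cyclic_group using x by blast
  then show ?thesis
    by (rule cyclic_imp_abelian_group)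
qed

section \<open>A 2-PDR of valency 3 when o(x) \<ge> 5\<close>

definition shift :: "('a, 'b) monoid_scheme \<Rightarrow> 'a \<Rightarrow> int \<Rightarrow> 'a \<Rightarrow> 'a" where
  "shift G x k g = x [^]\<^bsub>G\<^esub> k \<otimes>\<^bsub>G\<^esub> g"

definition pdr_conn :: "('a, 'b) monoid_scheme \<Rightarrow> 'a \<Rightarrow> nat \<Rightarrow> nat \<Rightarrow> 'a set" where
  "pdr_conn G x i j =
     (if i = 0 \<and> j = 1 then (\<lambda>k::int. x [^]\<^bsub>G\<^esub> k) ` {0, 1, 2}
      else if i = 1 \<and> j = 0 then (\<lambda>k::int. x [^]\<^bsub>G\<^esub> k) ` {-1, 0, 2}
      else {})"

abbreviation pdr_arcs :: "('a, 'b) monoid_scheme \<Rightarrow> 'a \<Rightarrow> (('a \<times> nat) \<times> ('a \<times> nat)) set" where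
  "pdr_arcs G x \<equiv> mcay_arcs G 2 (pdr_conn G x)"

lemma pdr_conn_diag: "pdr_conn G x i i = {}"
  by (auto simp: pdr_conn_def)

context group
begin

lemma shift_closed [simp]: "x \<in> carrier G \<Longrightarrow> g \<in> carrier G \<Longrightarrow> shift G x k g \<in> carrier G"
  by (simp add: shift_def)

lemma shift_zero [simp]: "g \<in> carrier G \<Longrightarrow> shift G x 0 g = g"
  by (simp add: shift_def)

lemma shift_shift [simp]:
  "x \<in> carrier G \<Longrightarrow> g \<in> carrier G \<Longrightarrow> shift G x k (shift G x l g) = shift G x (k + l) g"
  by (simp add: shift_def int_pow_mult m_assoc)

lemma eq_shift_iff:
  "x \<in> carrier G \<Longrightarrow> g \<in> carrier G \<Longrightarrow> h \<in> carrier G \<Longrightarrow>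
     h = shift G x k g \<longleftrightarrow> g = shift G x (- k) h"
  by (auto simp: shift_def int_pow_neg m_assoc[symmetric])

lemma shift_eq_shift_iff [simp]:
  assumes "x \<in> carrier G" "g \<in> carrier G" "\<bar>k - l\<bar> < int (ord x)"
  shows "shift G x k g = shift G x l g \<longleftrightarrow> k = l"
proof -
  have "shift G x k g = shift G x l g \<longleftrightarrow> x [^] k = x [^] l"
    using assms by (simp add: shift_def)
  also have "\<dots> \<longleftrightarrow> int (ord x) dvd (l - k)"
    using assms by (simp add: int_pow_eq)
  also have "\<dots> \<longleftrightarrow> k = l"
    using assms dvd_imp_le_int[of "l - k" "int (ord x)"] by (auto simp: abs_minus_commute)
  finally show ?thesis .
qed

lemma shift_eq_self_iff [simp]:
  assumes "x \<in> carrier G" "g \<in> carrier G" "\<bar>k\<bar> < int (ord x)"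
  shows "shift G x k g = g \<longleftrightarrow> k = 0" "g = shift G x k g \<longleftrightarrow> k = 0"
  using shift_eq_shift_iff[of x g k 0] assms by auto

lemma pdr_conn_subset: "x \<in> carrier G \<Longrightarrow> pdr_conn G x i j \<subseteq> carrier G"
  by (auto simp: pdr_conn_def)

lemma pdr_arc_iff:
  assumes x: "x \<in> carrier G" and g: "g \<in> carrier G" and h: "h \<in> carrier G"
  shows "((g, i), (h, j)) \<in> pdr_arcs G x \<longleftrightarrow>
     (i = 0 \<and> j = 1 \<and> (h = g \<or> h = shift G x 1 g \<or> h = shift G x 2 g)) \<or>
     (i = 1 \<and> j = 0 \<and> (h = shift G x (-1) g \<or> h = g \<or> h = shift G x 2 g))"
proof -
  have mem: "h \<otimes> inv g \<in> (\<lambda>k. x [^] k) ` K \<longleftrightarrow> (\<exists>k\<in>K. h = shift G x k g)"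
    for K :: "int set"
    using x g h by (auto simp: shift_def inv_solve_right')
  have "h \<otimes> inv g \<in> pdr_conn G x i j \<longleftrightarrow>
      (i = 0 \<and> j = 1 \<and> (\<exists>k\<in>{0, 1, 2}. h = shift G x k g)) \<or>
      (i = 1 \<and> j = 0 \<and> (\<exists>k\<in>{-1, 0, 2}. h = shift G x k g))"
    unfolding pdr_conn_def by (simp only: mem split: if_split) auto
  moreover have
    "((g, i), (h, j)) \<in> pdr_arcs G x \<longleftrightarrow> i < 2 \<and> j < 2 \<and> h \<otimes> inv g \<in> pdr_conn G x i j"
    by (rule mcay_arc_iff[OF g h pdr_conn_subset[OF x]])
  ultimately show ?thesis
    using g by auto
qed

lemma pdr_arc_into_iff:
  assumes x: "x \<in> carrier G" and g: "g \<in> carrier G" and h: "h \<in> carrier G"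
  shows "((h, j), (g, i)) \<in> pdr_arcs G x \<longleftrightarrow>
     (j = 0 \<and> i = 1 \<and> (h = g \<or> h = shift G x (-1) g \<or> h = shift G x (-2) g)) \<or>
     (j = 1 \<and> i = 0 \<and> (h = shift G x 1 g \<or> h = g \<or> h = shift G x (-2) g))"
  using x g h by (auto simp: pdr_arc_iff[OF x] eq_shift_iff[of x g h])

context
  fixes x
  assumes x: "x \<in> carrier G" and ord_x: "5 \<le> ord x"
begin

text \<open>The simplifier rewrites the literal 1 :: nat to Suc 0, so the level-1 equations below
  do not fire as rewrite rules; they are instantiated explicitly where needed.\<close>
lemma pdr_digon_iff:
  assumes g: "g \<in> carrier G" and v: "v \<in> mcay_vertices G 2"
  shows "digon (pdr_arcs G x) (g, 0) v \<longleftrightarrow> v = (g, 1) \<or> v = (shift G x 1 g, 1)"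
    and "digon (pdr_arcs G x) (g, 1) v \<longleftrightarrow> v = (g, 0) \<or> v = (shift G x (-1) g, 0)"
  using v x g ord_x
  by (auto simp: mcay_vertices_def digon_def pdr_arc_iff[OF x] pdr_arc_into_iff[OF x])

lemma pdr_one_way_arc_iff:
  assumes g: "g \<in> carrier G" and v: "v \<in> mcay_vertices G 2"
  shows "one_way_arc (pdr_arcs G x) (g, 0) v \<longleftrightarrow> v = (shift G x 2 g, 1)"
    and "one_way_arc (pdr_arcs G x) (g, 1) v \<longleftrightarrow> v = (shift G x 2 g, 0)"
  using v x g ord_x
  by (auto simp: mcay_vertices_def one_way_arc_def pdr_arc_iff[OF x] pdr_arc_into_iff[OF x])

lemma regular_pdr: "regular_digraph (mcay_vertices G 2) (pdr_arcs G x) 3"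
  unfolding regular_digraph_def
proof
  fix u assume "u \<in> mcay_vertices G 2"
  then obtain g i where u: "u = (g, i)" "g \<in> carrier G" "i < 2"
    by (auto simp: mcay_vertices_def)
  have nbrs:
    "{v \<in> mcay_vertices G 2. ((g, 0), v) \<in> pdr_arcs G x} =
      {(g, 1), (shift G x 1 g, 1), (shift G x 2 g, 1)}"
    "{v \<in> mcay_vertices G 2. (v, (g, 0)) \<in> pdr_arcs G x} =
      {(g, 1), (shift G x 1 g, 1), (shift G x (-2) g, 1)}"
    "{v \<in> mcay_vertices G 2. ((g, 1), v) \<in> pdr_arcs G x} =
      {(g, 0), (shift G x (-1) g, 0), (shift G x 2 g, 0)}"
    "{v \<in> mcay_vertices G 2. (v, (g, 1)) \<in> pdr_arcs G x} =
      {(g, 0), (shift G x (-1) g, 0), (shift G x (-2) g, 0)}"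
    using x u by (auto simp: mcay_vertices_def pdr_arc_iff[OF x] pdr_arc_into_iff[OF x])
  show "card {v \<in> mcay_vertices G 2. (u, v) \<in> pdr_arcs G x} = 3 \<and>
      card {v \<in> mcay_vertices G 2. (v, u) \<in> pdr_arcs G x} = 3"
  proof (cases "i = 0")
    case True
    then show ?thesis using x ord_x u by (simp add: nbrs)
  next
    case False
    then have "i = 1" using u(3) by simp
    then show ?thesis using x ord_x u nbrs(3,4) by simp
  qed
qed

lemma pdr_aut_level_0:
  assumes \<sigma>: "\<sigma> \<in> carrier (digraph_aut (mcay_vertices G 2) (pdr_arcs G x))" and g: "g \<in> carrier G"
  obtains g' where "g' \<in> carrier G" "\<sigma> (g, 0) = (g', 0)"
proof -
  let ?A = "pdr_arcs G x" and ?g1 = "shift G x 1 g" and ?g2 = "shift G x 2 g"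
  note V = mcay_aut_closed[OF \<sigma>]
  have D: "digon ?A (\<sigma> (h, i)) (\<sigma> (h', i'))" if "digon ?A (h, i) (h', i')"
    "h \<in> carrier G" "h' \<in> carrier G" "i < 2" "i' < 2" for h i h' i'
    using digraph_aut_digon_iff[OF \<sigma>] that by simp
  obtain a i where a: "\<sigma> (g, 0) = (a, i)" "a \<in> carrier G" "i < 2"
    using V[OF g, of 0] by (cases "\<sigma> (g, 0)") auto
  \<comment> \<open>From a level-1 image, the digon path (g,0), (x g,1), (x g,0), (x^2 g,1) only reaches
    shifts of a by -2 .. 1, whereas the one-way arc out of (g,0) forces x^2 a.\<close>
  have "i \<noteq> 1"
  proof
    assume "i = 1"
    have "digon ?A (a, 1) (\<sigma> (?g1, 1))"
      using D[of g 0 ?g1 1] a \<open>i = 1\<close> g x by (simp add: pdr_digon_iff)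
    then obtain b where b: "\<sigma> (?g1, 1) = (b, 0)" "b = a \<or> b = shift G x (-1) a"
      using pdr_digon_iff(2)[OF a(2) V] g x by auto
    have "digon ?A (b, 0) (\<sigma> (?g1, 0))"
      using D[of ?g1 1 ?g1 0] pdr_digon_iff(2)[of ?g1 "(?g1, 0)"] b g x by simp
    then obtain c where c: "\<sigma> (?g1, 0) = (c, 1)" "c = b \<or> c = shift G x 1 b"
      using pdr_digon_iff(1)[OF _ V] b a g x by auto
    have "digon ?A (c, 1) (\<sigma> (?g2, 1))"
      using D[of ?g1 0 ?g2 1] pdr_digon_iff(1)[of ?g1 "(?g2, 1)"] c g x by simp
    then have "\<sigma> (?g2, 1) = (c, 0) \<or> \<sigma> (?g2, 1) = (shift G x (-1) c, 0)"
      using pdr_digon_iff(2)[OF _ V] c b a g x by auto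
    moreover have "one_way_arc ?A (a, 1) (\<sigma> (?g2, 1))"
      using digraph_aut_one_way_arc_iff[OF \<sigma>, of "(g, 0)" "(?g2, 1)"] a \<open>i = 1\<close> g x
      by (simp add: pdr_one_way_arc_iff)
    then have "\<sigma> (?g2, 1) = (shift G x 2 a, 0)"
      using pdr_one_way_arc_iff(2)[OF a(2) V] g x by auto
    ultimately show False
      using b c a x ord_x by auto
  qed
  with a that show ?thesis
    by (auto simp: less_2_cases_iff)
qed

lemma pdr_aut_level_1:
  assumes \<sigma>: "\<sigma> \<in> carrier (digraph_aut (mcay_vertices G 2) (pdr_arcs G x))"
    and g: "g \<in> carrier G" and g': "g' \<in> carrier G" and \<sigma>_g: "\<sigma> (g, 0) = (g', 0)"
  shows "\<sigma> (g, 1) = (g', 1)"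
proof -
  let ?A = "pdr_arcs G x" and ?g2 = "shift G x 2 g"
  note V = mcay_aut_closed[OF \<sigma>]
  have "digon ?A (g', 0) (\<sigma> (g, 1))"
    using digraph_aut_digon_iff[OF \<sigma>, of "(g, 0)" "(g, 1)"] \<sigma>_g g by (simp add: pdr_digon_iff)
  then have \<sigma>_g1: "\<sigma> (g, 1) = (g', 1) \<or> \<sigma> (g, 1) = (shift G x 1 g', 1)"
    using pdr_digon_iff(1)[OF g' V] g by simp
  have "one_way_arc ?A (g', 0) (\<sigma> (?g2, 1))"
    using digraph_aut_one_way_arc_iff[OF \<sigma>, of "(g, 0)" "(?g2, 1)"] \<sigma>_g g x
    by (simp add: pdr_one_way_arc_iff)
  then have "\<sigma> (?g2, 1) = (shift G x 2 g', 1)"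
    using pdr_one_way_arc_iff(1)[OF g' V] g x by simp
  moreover have "digon ?A (\<sigma> (?g2, 1)) (\<sigma> (?g2, 0))"
    using digraph_aut_digon_iff[OF \<sigma>, of "(?g2, 1)" "(?g2, 0)"] pdr_digon_iff(2)[of ?g2 "(?g2, 0)"] g x
    by simp
  ultimately have "\<sigma> (?g2, 0) = (shift G x 2 g', 0) \<or> \<sigma> (?g2, 0) = (shift G x 1 g', 0)"
    using pdr_digon_iff(2)[OF _ V] g g' x by auto
  moreover have "one_way_arc ?A (\<sigma> (g, 1)) (\<sigma> (?g2, 0))"
    using digraph_aut_one_way_arc_iff[OF \<sigma>, of "(g, 1)" "(?g2, 0)"]
      pdr_one_way_arc_iff(2)[of g "(?g2, 0)"] g x
    by simp
  \<comment> \<open>If \<sigma> (g,1) were (x g', 1), its one-way arc would end at (x^3 g', 0), not a digon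
    neighbour of (x^2 g', 1).\<close>
  ultimately show ?thesis
    using \<sigma>_g1 pdr_one_way_arc_iff(2)[OF _ V[of ?g2 0], of "shift G x 1 g'"] g g' x ord_x
    by auto
qed

lemma pdr_aut_shift:
  assumes \<sigma>: "\<sigma> \<in> carrier (digraph_aut (mcay_vertices G 2) (pdr_arcs G x))"
    and g: "g \<in> carrier G" and g': "g' \<in> carrier G" and \<sigma>_g: "\<sigma> (g, 0) = (g', 0)"
  shows "\<sigma> (shift G x 1 g, 0) = (shift G x 1 g', 0)"
proof -
  let ?A = "pdr_arcs G x" and ?g1 = "shift G x 1 g"
  note V = mcay_aut_closed[OF \<sigma>]
  have inj: "\<sigma> (h, i) \<noteq> \<sigma> (h', i)"
    if "h \<noteq> h'" "h \<in> carrier G" "h' \<in> carrier G" "i < 2" for h h' i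
    using inj_onD[OF digraph_aut_inj_on[OF \<sigma>]] that by fastforce
  have \<sigma>_g1: "\<sigma> (g, 1) = (g', 1)"
    using pdr_aut_level_1[OF assms] .
  have "digon ?A (g', 0) (\<sigma> (?g1, 1))"
    using digraph_aut_digon_iff[OF \<sigma>, of "(g, 0)" "(?g1, 1)"] \<sigma>_g g x by (simp add: pdr_digon_iff)
  then have "\<sigma> (?g1, 1) = (g', 1) \<or> \<sigma> (?g1, 1) = (shift G x 1 g', 1)"
    using pdr_digon_iff(1)[OF g' V] g x by simp
  moreover have "\<sigma> (?g1, 1) \<noteq> \<sigma> (g, 1)"
    using inj[of ?g1 g 1] g x ord_x by simp
  ultimately have \<sigma>_g11: "\<sigma> (?g1, 1) = (shift G x 1 g', 1)"
    using \<sigma>_g1 by auto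
  have "digon ?A (\<sigma> (?g1, 1)) (\<sigma> (?g1, 0))"
    using digraph_aut_digon_iff[OF \<sigma>, of "(?g1, 1)" "(?g1, 0)"] pdr_digon_iff(2)[of ?g1 "(?g1, 0)"] g x
    by simp
  then have "\<sigma> (?g1, 0) = (shift G x 1 g', 0) \<or> \<sigma> (?g1, 0) = (g', 0)"
    using \<sigma>_g11 pdr_digon_iff(2)[OF _ V] g g' x by auto
  moreover have "\<sigma> (?g1, 0) \<noteq> \<sigma> (g, 0)"
    using inj[of ?g1 g 0] g x ord_x by simp
  ultimately show ?thesis
    using \<sigma>_g by auto
qed

lemma pdr_aut_is_mcay_rmult:
  assumes fin: "finite (carrier G)" and gen: "generate G {x} = carrier G"
    and \<sigma>: "\<sigma> \<in> carrier (digraph_aut (mcay_vertices G 2) (pdr_arcs G x))"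
  shows "\<sigma> \<in> mcay_rmult G 2 ` carrier G"
proof -
  obtain h where h: "h \<in> carrier G" "\<sigma> (\<one>, 0) = (h, 0)"
    using pdr_aut_level_0[OF \<sigma> one_closed] by metis
  have level_0: "\<sigma> (x [^] n, 0) = (x [^] n \<otimes> h, 0)" for n :: nat
  proof (induction n)
    case 0
    then show ?case using h by simp
  next
    case (Suc n)
    have "x \<otimes> x [^] n = x [^] Suc n"
      by (rule nat_pow_Suc2[OF x, symmetric])
    then have "shift G x 1 (x [^] n) = x [^] Suc n" "shift G x 1 (x [^] n \<otimes> h) = x [^] Suc n \<otimes> h"
      using x h by (simp_all add: shift_def m_assoc[symmetric])
    then show ?case
      using pdr_aut_shift[OF \<sigma> _ _ Suc.IH] x h by simp
  qed
  have "\<sigma> v = mcay_rmult G 2 h v" for v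
  proof (cases "v \<in> mcay_vertices G 2")
    case True
    then obtain g i where v: "v = (g, i)" "g \<in> carrier G" "i < 2"
      by (cases v) auto
    then obtain n :: nat where "g = x [^] n"
      using generate_pow_on_finite_carrier[OF fin x] gen by auto
    then have \<sigma>_g: "\<sigma> (g, 0) = (g \<otimes> h, 0)"
      using level_0 by simp
    moreover have "\<sigma> (g, 1) = (g \<otimes> h, 1)"
      using pdr_aut_level_1[OF \<sigma> _ _ \<sigma>_g] v h by simp
    ultimately show ?thesis
      using v h by (auto simp: mcay_rmult_def less_2_cases_iff)
  next
    case False
    have "\<sigma> \<in> extensional (mcay_vertices G 2)"
      using \<sigma> by (simp add: digraph_aut_carrier Bij_def)
    then have "\<sigma> v = undefined"
      using False by (rule extensional_arb)
    then show ?thesis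
      using False by (simp add: mcay_rmult_def)
  qed
  then have "\<sigma> = mcay_rmult G 2 h"
    by (rule ext)
  with h(1) show ?thesis
    by (rule rev_image_eqI)
qed

lemma pdr_admits_PDR:
  assumes fin: "finite (carrier G)" and gen: "generate G {x} = carrier G"
  shows "admits_PDR G 2 3"
proof -
  interpret comm_group G
    using comm_group_if_generate_singleton[OF x gen] .
  have T: "\<forall>i<2. \<forall>j<2. pdr_conn G x i j \<subseteq> carrier G"
    by (simp add: pdr_conn_subset[OF x])
  have diag: "\<forall>i<2. pdr_conn G x i i = {}"
    by (simp add: pdr_conn_diag)
  have "carrier (digraph_aut (mcay_vertices G 2) (pdr_arcs G x)) \<subseteq> mcay_rmult G 2 ` carrier G"
    using pdr_aut_is_mcay_rmult[OF fin gen] by blast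
  then have "digraph_aut (mcay_vertices G 2) (pdr_arcs G x) \<cong> G"
    by (rule mcay_aut_iso[OF pos2 T])
  then show ?thesis
    unfolding admits_PDR_def using T diag regular_pdr by blast
qed

end

end

theorem lemma3p2:
  fixes G (structure) and x
  assumes "group G" and "finite (carrier G)"
    and "x \<in> carrier G" and "generate G {x} = carrier G"
  shows "admits_PDR G 2 3 \<longleftrightarrow> group.ord G x \<ge> 5"
proof -
  interpret comm_group G
    using group.comm_group_if_generate_singleton[OF assms(1,3,4)] .
  have ord_x: "ord x = card (carrier G)"
    using generate_pow_card[OF assms(3)] assms(4) by simp
  show ?thesis
  proof
    assume adm: "admits_PDR G 2 3"
    show "5 \<le> ord x"
    proof (rule ccontr)
      assume "\<not> 5 \<le> ord x"
      then have "card (carrier G) \<le> Suc 3"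
        using ord_x by simp
      with adm show False
        using not_admits_PDR_2_if_card_le[OF assms(2)] by blast
    qed
  next
    assume "5 \<le> ord x"
    then show "admits_PDR G 2 3"
      by (rule pdr_admits_PDR[OF assms(3) _ assms(2,4)])
  qed
qed

end
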